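(* There is an absolute constant $c>0$ such that for every $\varepsilon>0$ there exist a finite ground set $E$, a downward-closed family $\mathcal{F}\subseteq 2^E$ and a product distribution $D$ of the element weights with $\textsf{EoR}(\mathcal{F},D)\le\varepsilon$ and $\textsf{RoE}(\mathcal{F},D)\ge c$ (i.e. $\textsf{RoE}(\mathcal{F},D)\in\Omega(1)$).
   Context: Setting (prophet inequality under a downward-closed constraint). $E$ is a finite ground set and $\mathcal{F}\subseteq 2^E$ is downward-closed (if $S\in\mathcal{F}$ and $T\subseteq S$ then $T\in\mathcal{F}$). Each $e\in E$ has a nonnegative random weight $w_e\sim D_e$, independently across elements, and $D=\times_{e\in E}D_e$ is the product distribution. The elements arrive one by one in a fixed order, each revealed together with its realized weight; an online algorithm (which knows $\mathcal{F}$ and $D$ and may be randomized) must decide immediately and irrevocably upon each arrival whether to accept the element, keeping the accepted set in $\mathcal{F}$ at all times. Let $f(\boldsymbol{w})=\max_{S\in\mathcal{F}}\sum_{e\in S}w_e$ be the offline optimum, and let $\textsf{ALG}(\boldsymbol{w})$ be the set chosen by algorithm $\textsf{ALG}$, with value $\boldsymbol{w}(\textsf{ALG}(\boldsymbol{w}))=\sum_{e\in\textsf{ALG}(\boldsymbol{w})}w_e$. Define $\textsf{EoR}(\mathcal{F},D,\textsf{ALG})=\mathbf{E}[\boldsymbol{w}(\textsf{ALG}(\boldsymbol{w}))/f(\boldsymbol{w})]$ and $\textsf{RoE}(\mathcal{F},D,\textsf{ALG})=\mathbf{E}[\boldsymbol{w}(\textsf{ALG}(\boldsymbol{w}))]/\mathbf{E}[f(\boldsymbol{w})]$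 (expectations over $\boldsymbol{w}\sim D$ and the algorithm's randomness); $\textsf{EoR}(\mathcal{F},D)=\sup_{\textsf{ALG}}\textsf{EoR}(\mathcal{F},D,\textsf{ALG})$ and $\textsf{RoE}(\mathcal{F},D)=\sup_{\textsf{ALG}}\textsf{RoE}(\mathcal{F},D,\textsf{ALG})$. *)

theory Defs
  imports "HOL-Probability.Probability"
begin

text \<open>Ground set E = {0..<n}; elements arrive in the order 0, 1, ..., n-1.
  D e is the weight distribution of element e (independent across elements).
  A (randomized) online algorithm is given in behavioural form: a function q
  mapping (weights revealed so far, set accepted so far, current weight) to the
  probability of accepting the current element. An acceptance that would leave
  the family F is turned into a rejection, so the accepted set stays in F.\<close>

definition downward_closed :: "nat set set \<Rightarrow> bool" where
  "downward_closed F \<longleftrightarrow> (\<forall>S\<in>F. \<forall>T. T \<subseteq> S \<longrightarrow> T \<in> F)"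

definition valid_instance :: "nat \<Rightarrow> nat set set \<Rightarrow> (nat \<Rightarrow> real pmf) \<Rightarrow> bool" where
  "valid_instance n F D \<longleftrightarrow>
     F \<subseteq> Pow {..<n} \<and> {} \<in> F \<and> downward_closed F \<and>
     (\<forall>e<n. finite (set_pmf (D e)) \<and> (\<forall>x\<in>set_pmf (D e). 0 \<le> x))"

type_synonym online_alg = "real list \<Rightarrow> nat set \<Rightarrow> real \<Rightarrow> real"

primrec run :: "online_alg \<Rightarrow> nat set set \<Rightarrow> (nat \<Rightarrow> real pmf) \<Rightarrow> nat
                 \<Rightarrow> (real list \<times> nat set) pmf" where
  "run q F D 0 = return_pmf ([], {})"
| "run q F D (Suc i) =
     bind_pmf (run q F D i) (\<lambda>(ws, S).
       bind_pmf (D i) (\<lambda>w.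
         map_pmf (\<lambda>b. (ws @ [w], if b \<and> insert i S \<in> F then insert i S else S))
                 (bernoulli_pmf (q ws S w))))"

primrec wdist :: "(nat \<Rightarrow> real pmf) \<Rightarrow> nat \<Rightarrow> real list pmf" where
  "wdist D 0 = return_pmf []"
| "wdist D (Suc i) = bind_pmf (wdist D i) (\<lambda>ws. map_pmf (\<lambda>w. ws @ [w]) (D i))"

definition setval :: "real list \<Rightarrow> nat set \<Rightarrow> real" where
  "setval ws S = (\<Sum>j\<in>S. ws ! j)"

definition opt :: "nat set set \<Rightarrow> real list \<Rightarrow> real" where
  "opt F ws = Max ((\<lambda>S. setval ws S) ` F)"

text \<open>Ratio ALG/OPT, with the convention 0/0 = 1 (when OPT = 0, ALG = 0 is optimal).\<close>
definition ratio :: "real \<Rightarrow> real \<Rightarrow> real" where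
  "ratio a b = (if b = 0 then 1 else a / b)"

definition EoR_alg :: "nat \<Rightarrow> nat set set \<Rightarrow> (nat \<Rightarrow> real pmf) \<Rightarrow> online_alg \<Rightarrow> real" where
  "EoR_alg n F D q = measure_pmf.expectation (run q F D n)
       (\<lambda>(ws, S). ratio (setval ws S) (opt F ws))"

definition RoE_alg :: "nat \<Rightarrow> nat set set \<Rightarrow> (nat \<Rightarrow> real pmf) \<Rightarrow> online_alg \<Rightarrow> real" where
  "RoE_alg n F D q = measure_pmf.expectation (run q F D n) (\<lambda>(ws, S). setval ws S)
       / measure_pmf.expectation (wdist D n) (opt F)"

definition EoR :: "nat \<Rightarrow> nat set set \<Rightarrow> (nat \<Rightarrow> real pmf) \<Rightarrow> real" where
  "EoR n F D = (SUP q. EoR_alg n F D q)"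

definition RoE :: "nat \<Rightarrow> nat set set \<Rightarrow> (nat \<Rightarrow> real pmf) \<Rightarrow> real" where
  "RoE n F D = (SUP q. RoE_alg n F D q)"

end

theory Submission
  imports Defs
begin

text \<open>The instance consists of m blocks of s elements with independent weights in {0, 1}, each
  equal to 1 with probability p = 1/s, followed by one heavy element of weight H with probability r;
  a feasible set lies inside a single block or consists of the heavy element. With H r = s the
  expected optimum is at most 2 s, and accepting only the heavy element earns s, so RoE \<ge> 1/2.
  For the ratio: unless the heavy element is present or no block is entirely full (probabilities r
  and (1 - p^s)^m), the optimum is at least s, while any online algorithm collects at most
  1 + (s - 1) p \<le> 2 from the blocks in expectation, since after its first acceptance only the later
  elements of the same block, each worth p in expectation, can still be added. Hence
  EoR \<le> r + 2/s + (1 - p^s)^m, which is small once r is small and s and then m are large.\<close>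

lemma expectation_bind_pmf_finite:
  fixes f :: "'b \<Rightarrow> real"
  assumes "finite (set_pmf M)" "\<And>x. x \<in> set_pmf M \<Longrightarrow> finite (set_pmf (N x))"
  shows "measure_pmf.expectation (bind_pmf M N) f =
    measure_pmf.expectation M (\<lambda>x. measure_pmf.expectation (N x) f)"
proof -
  have "measure_pmf.expectation (bind_pmf M N) f =
      (\<Sum>a\<in>set_pmf M. pmf M a *\<^sub>R measure_pmf.expectation (N a) f)"
    using assms by (intro pmf_expectation_bind) auto
  also have "\<dots> = measure_pmf.expectation M (\<lambda>x. measure_pmf.expectation (N x) f)"
    using assms by (subst integral_measure_pmf[of "set_pmf M"]) auto
  finally show ?thesis .
qed

lemma expectation_cong_pmf:
  fixes f g :: "'a \<Rightarrow> real"
  assumes "\<And>x. x \<in> set_pmf M \<Longrightarrow> f x = g x"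
  shows "measure_pmf.expectation M f = measure_pmf.expectation M g"
  using assms by (intro integral_cong_AE) (auto simp: AE_measure_pmf_iff)

lemma expectation_mono_pmf_finite:
  fixes f g :: "'a \<Rightarrow> real"
  assumes "finite (set_pmf M)" "\<And>x. x \<in> set_pmf M \<Longrightarrow> f x \<le> g x"
  shows "measure_pmf.expectation M f \<le> measure_pmf.expectation M g"
  using assms
  by (intro integral_mono_AE) (auto simp: AE_measure_pmf_iff intro: integrable_measure_pmf_finite)

lemma expectation_le_const_pmf_finite:
  fixes f :: "'a \<Rightarrow> real"
  assumes "finite (set_pmf M)" "\<And>x. x \<in> set_pmf M \<Longrightarrow> f x \<le> c"
  shows "measure_pmf.expectation M f \<le> c"
  using expectation_mono_pmf_finite[of M f "\<lambda>_. c"] assms by simp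

lemma finite_set_pmf_wdist:
  "(\<And>j. j < i \<Longrightarrow> finite (set_pmf (D j))) \<Longrightarrow> finite (set_pmf (wdist D i))"
  by (induction i) (auto simp: set_bind_pmf)

lemma set_pmf_wdistD:
  "ws \<in> set_pmf (wdist D i) \<Longrightarrow> length ws = i \<and> (\<forall>j<i. ws ! j \<in> set_pmf (D j))"
  by (induction i arbitrary: ws) (auto simp: set_bind_pmf nth_append less_Suc_eq)

lemma wdist_cong: "(\<And>j. j < i \<Longrightarrow> D j = D' j) \<Longrightarrow> wdist D i = wdist D' i"
  by (induction i) auto

lemma wdist_add:
  "wdist D (i + k) = bind_pmf (wdist D i) (\<lambda>ws. map_pmf (\<lambda>vs. ws @ vs) (wdist (\<lambda>j. D (i + j)) k))"
  by (induction k)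
    (simp_all add: bind_return_pmf' bind_assoc_pmf bind_map_pmf map_bind_pmf map_pmf_comp)

lemma expectation_wdist_Suc:
  fixes g :: "real list \<Rightarrow> real"
  assumes "\<forall>j\<le>i. finite (set_pmf (D j))"
  shows "measure_pmf.expectation (wdist D (Suc i)) g =
    measure_pmf.expectation (wdist D i) (\<lambda>ws. measure_pmf.expectation (D i) (\<lambda>w. g (ws @ [w])))"
  unfolding wdist.simps using assms
  by (subst expectation_bind_pmf_finite) (auto intro: finite_set_pmf_wdist)

lemma finite_set_pmf_run:
  "(\<And>j. j < i \<Longrightarrow> finite (set_pmf (D j))) \<Longrightarrow> finite (set_pmf (run q F D i))"
  by (induction i) (auto simp: set_bind_pmf split: prod.splits)

lemma set_pmf_runD:
  assumes "{} \<in> F" "(ws, S) \<in> set_pmf (run q F D i)"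
  shows "length ws = i \<and> S \<subseteq> {..<i} \<and> S \<in> F \<and> (\<forall>j<i. ws ! j \<in> set_pmf (D j))"
  using assms(2)
proof (induction i arbitrary: ws S)
  case 0
  then show ?case using assms(1) by simp
next
  case (Suc i)
  then obtain ws' S' w b where prev: "(ws', S') \<in> set_pmf (run q F D i)" "w \<in> set_pmf (D i)"
    and "ws = ws' @ [w]" "S = (if b \<and> insert i S' \<in> F then insert i S' else S')"
    by (auto simp: set_bind_pmf split: prod.splits)
  with Suc.IH[OF prev(1)] show ?case by (auto simp: nth_append less_Suc_eq)
qed

lemma map_fst_run: "map_pmf fst (run q F D i) = wdist D i"
proof (induction i)
  case 0
  then show ?case by simp
next
  case (Suc i)
  have "map_pmf fst (run q F D (Suc i)) =
      bind_pmf (run q F D i) (\<lambda>x. map_pmf (\<lambda>w. fst x @ [w]) (D i))"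
    by (auto simp: map_bind_pmf map_pmf_comp intro!: bind_pmf_cong split: prod.splits)
      (simp add: map_pmf_def)
  also have "\<dots> = bind_pmf (map_pmf fst (run q F D i)) (\<lambda>ws. map_pmf (\<lambda>w. ws @ [w]) (D i))"
    by (simp add: bind_map_pmf)
  finally show ?case using Suc by simp
qed

lemma expectation_run_fst:
  fixes g :: "real list \<Rightarrow> real"
  shows "measure_pmf.expectation (run q F D i) (\<lambda>x. g (fst x))
    = measure_pmf.expectation (wdist D i) g"
  using integral_map_pmf[of fst "run q F D i" g] by (simp add: map_fst_run)

lemma expectation_run_Suc:
  fixes f :: "real list \<times> nat set \<Rightarrow> real"
  assumes "\<forall>j\<le>i. finite (set_pmf (D j))"
  shows "measure_pmf.expectation (run q F D (Suc i)) f =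
    measure_pmf.expectation (run q F D i) (\<lambda>(ws, S). measure_pmf.expectation (D i) (\<lambda>w.
      measure_pmf.expectation (bernoulli_pmf (q ws S w))
        (\<lambda>b. f (ws @ [w], if b \<and> insert i S \<in> F then insert i S else S))))"
proof -
  have "finite (set_pmf (run q F D i))" using assms by (intro finite_set_pmf_run) auto
  then show ?thesis
    unfolding run.simps using assms
    by (subst expectation_bind_pmf_finite)
      (auto simp: set_bind_pmf expectation_bind_pmf_finite
        split: prod.splits intro!: expectation_cong_pmf)
qed

lemma setval_append: "S \<subseteq> {..<length ws} \<Longrightarrow> setval (ws @ [w]) S = setval ws S"
  unfolding setval_def by (intro sum.cong) (auto simp: nth_append)

lemma setval_append_insert:
  assumes "S \<subseteq> {..<length ws}"
  shows "setval (ws @ [w]) (insert (length ws) S) = w + setval ws S"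
proof -
  have "finite S" "length ws \<notin> S" using assms finite_subset by auto
  then show ?thesis using setval_append[OF assms] by (simp add: setval_def)
qed

lemma setval_nonneg: "(\<And>j. j \<in> S \<Longrightarrow> 0 \<le> ws ! j) \<Longrightarrow> 0 \<le> setval ws S"
  unfolding setval_def by (rule sum_nonneg) auto

lemma setval_le_opt: "finite F \<Longrightarrow> S \<in> F \<Longrightarrow> setval ws S \<le> opt F ws"
  unfolding opt_def by (rule Max_ge) auto

lemma opt_le: "finite F \<Longrightarrow> F \<noteq> {} \<Longrightarrow> (\<And>S. S \<in> F \<Longrightarrow> setval ws S \<le> c) \<Longrightarrow> opt F ws \<le> c"
  unfolding opt_def by (rule Max.boundedI) auto

lemma ratio_le_1: "0 \<le> a \<Longrightarrow> a \<le> b \<Longrightarrow> ratio a b \<le> 1"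
  unfolding ratio_def by auto

lemma ratio_le_divide: "0 \<le> a \<Longrightarrow> 0 < t \<Longrightarrow> t \<le> b \<Longrightarrow> ratio a b \<le> a / t"
  unfolding ratio_def by (auto intro!: divide_left_mono)

lemma expectation_run_Suc_setval_restrict:
  assumes "{} \<in> F" "\<forall>j\<le>i. finite (set_pmf (D j))"
  shows "measure_pmf.expectation (run q F D (Suc i)) (\<lambda>(ws, S). setval ws (S \<inter> {..<i}))
    = measure_pmf.expectation (run q F D i) (\<lambda>(ws, S). setval ws S)"
  unfolding expectation_run_Suc[OF assms(2)]
proof (rule expectation_cong_pmf, clarsimp)
  fix ws S assume "(ws, S) \<in> set_pmf (run q F D i)"
  then have "length ws = i" "S \<subseteq> {..<i}" using set_pmf_runD[OF assms(1)] by auto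
  then have "setval (ws @ [w]) ((if c \<and> insert i S \<in> F then insert i S else S) \<inter> {..<i}) = setval ws S"
    for w c by (simp add: Int_absorb2 setval_append)
  then show "measure_pmf.expectation (D i) (\<lambda>w. measure_pmf.expectation (bernoulli_pmf (q ws S w))
      (\<lambda>c. setval (ws @ [w]) ((if c \<and> insert i S \<in> F then insert i S else S) \<inter> {..<i}))) = setval ws S"
    by simp
qed

lemma set_pmf_run_fst: "(ws, S) \<in> set_pmf (run q F D i) \<Longrightarrow> ws \<in> set_pmf (wdist D i)"
  by (metis map_fst_run fst_conv pmf.set_map rev_image_eqI)

lemma finite_set_pmf_valid_instance:
  "valid_instance n F D \<Longrightarrow> j < n \<Longrightarrow> finite (set_pmf (D j))"
  by (simp add: valid_instance_def)

lemma finite_valid_instance: "valid_instance n F D \<Longrightarrow> finite F"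
  unfolding valid_instance_def by (meson finite_Pow_iff finite_lessThan finite_subset)

lemma opt_nonneg: "finite F \<Longrightarrow> {} \<in> F \<Longrightarrow> 0 \<le> opt F ws"
  using setval_le_opt[of F "{}" ws] by (simp add: setval_def)

lemma expectation_setval_le_expectation_opt:
  assumes "valid_instance n F D"
  shows "measure_pmf.expectation (run q F D n) (\<lambda>(ws, S). setval ws S)
    \<le> measure_pmf.expectation (wdist D n) (opt F)"
proof -
  have "{} \<in> F" using assms by (simp add: valid_instance_def)
  have "measure_pmf.expectation (run q F D n) (\<lambda>(ws, S). setval ws S)
      \<le> measure_pmf.expectation (run q F D n) (\<lambda>x. opt F (fst x))"
    using assms set_pmf_runD[OF \<open>{} \<in> F\<close>]
    by (intro expectation_mono_pmf_finite finite_set_pmf_run)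
      (auto simp: finite_set_pmf_valid_instance intro!: setval_le_opt finite_valid_instance)
  also have "\<dots> = measure_pmf.expectation (wdist D n) (opt F)"
    by (rule expectation_run_fst)
  finally show ?thesis .
qed

lemma RoE_alg_le_1:
  assumes "valid_instance n F D"
  shows "RoE_alg n F D q \<le> 1"
proof -
  have "finite F" "{} \<in> F"
    using assms finite_valid_instance by (auto simp: valid_instance_def)
  then have "0 \<le> measure_pmf.expectation (wdist D n) (opt F)"
    by (intro integral_nonneg_AE AE_I2 opt_nonneg)
  then show ?thesis
    using expectation_setval_le_expectation_opt[OF assms, of q]
    unfolding RoE_alg_def by (auto simp: divide_le_eq_1)
qed

lemma RoE_alg_le_RoE: "valid_instance n F D \<Longrightarrow> RoE_alg n F D q \<le> RoE n F D"
  unfolding RoE_def by (rule cSUP_upper) (auto intro: bdd_aboveI RoE_alg_le_1)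

lemma EoR_le: "(\<And>q. EoR_alg n F D q \<le> c) \<Longrightarrow> EoR n F D \<le> c"
  unfolding EoR_def by (rule cSUP_least) auto

text \<open>The arriving element has index length ws.\<close>
definition accept_only :: "nat \<Rightarrow> online_alg" where
  "accept_only N ws S w = of_bool (length ws = N)"

lemma set_pmf_run_accept_only:
  assumes "{} \<in> F" "i \<le> N" "(ws, S) \<in> set_pmf (run (accept_only N) F D i)"
  shows "S = {}"
  using assms(2,3)
proof (induction i arbitrary: ws S)
  case 0
  then show ?case by simp
next
  case (Suc i)
  then obtain ws' S' w c where prev: "(ws', S') \<in> set_pmf (run (accept_only N) F D i)"
    and c: "c \<in> set_pmf (bernoulli_pmf (accept_only N ws' S' w))"
    and S: "S = (if c \<and> insert i S' \<in> F then insert i S' else S')"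
    by (auto simp: set_bind_pmf split: prod.splits)
  have "length ws' = i" using set_pmf_runD[OF assms(1) prev] by simp
  then have "\<not> c" using c Suc.prems(1) by (auto simp: accept_only_def set_pmf_iff)
  then show ?case using S Suc.IH[OF _ prev] Suc.prems(1) by simp
qed

section \<open>The block instance\<close>

definition two_point_pmf :: "real \<Rightarrow> real \<Rightarrow> real pmf" where
  "two_point_pmf p a = map_pmf (\<lambda>b. if b then a else 0) (bernoulli_pmf p)"

lemma set_two_point_pmf: "set_pmf (two_point_pmf p a) \<subseteq> {0, a}"
  by (auto simp: two_point_pmf_def)

lemma finite_set_two_point_pmf: "finite (set_pmf (two_point_pmf p a))"
  using set_two_point_pmf by (rule finite_subset) simp

lemma expectation_two_point_pmf:
  "0 \<le> p \<Longrightarrow> p \<le> 1 \<Longrightarrow> measure_pmf.expectation (two_point_pmf p a) f = f a * p + f 0 * (1 - p)"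
  by (simp add: two_point_pmf_def)

definition block :: "nat \<Rightarrow> nat \<Rightarrow> nat set" where
  "block s b = {b * s..<b * s + s}"

lemma mem_block_iff: "0 < s \<Longrightarrow> j \<in> block s b \<longleftrightarrow> j div s = b"
  unfolding block_def
  by (metis atLeastLessThan_iff add.commute div_nat_eqI dividend_less_times_div mult.commute
      mult_Suc times_div_less_eq_dividend)

lemma card_block: "card (block s b) = s"
  by (simp add: block_def)

lemma block_subset_lessThan: "b < m \<Longrightarrow> block s b \<subseteq> {..<m * s}"
proof -
  assume "b < m"
  then have "b * s + s \<le> m * s" by (metis Suc_leI mult_Suc mult_le_mono1 add.commute)
  then show ?thesis by (auto simp: block_def)
qed

definition block_family :: "nat \<Rightarrow> nat \<Rightarrow> nat set set" where
  "block_family s m = {S. (\<exists>b<m. S \<subseteq> block s b) \<or> S \<subseteq> {m * s}}"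

definition block_weights :: "nat \<Rightarrow> nat \<Rightarrow> real \<Rightarrow> real \<Rightarrow> real \<Rightarrow> nat \<Rightarrow> real pmf" where
  "block_weights s m p r H e = (if e < m * s then two_point_pmf p 1 else two_point_pmf r H)"

lemma block_family_subset_Pow: "block_family s m \<subseteq> Pow {..<Suc (m * s)}"
  using block_subset_lessThan by (fastforce simp: block_family_def)

lemma finite_block_family: "finite (block_family s m)"
  using block_family_subset_Pow by (rule finite_subset) simp

lemma finite_set_block_weights: "finite (set_pmf (block_weights s m p r H e))"
  by (simp add: block_weights_def finite_set_two_point_pmf)

lemma downward_closed_block_family: "downward_closed (block_family s m)"
  unfolding downward_closed_def block_family_def by blast

lemma valid_instance_block:
  "0 \<le> H \<Longrightarrow> valid_instance (Suc (m * s)) (block_family s m) (block_weights s m p r H)"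
  using block_family_subset_Pow downward_closed_block_family
    set_two_point_pmf[of p 1] set_two_point_pmf[of r H]
  unfolding valid_instance_def
  by (auto simp: block_family_def block_weights_def finite_set_two_point_pmf)

lemma insert_mem_block_family_iff:
  assumes "0 < s" "b < m" "S \<subseteq> block s b" "S \<noteq> {}" "j < m * s"
  shows "insert j S \<in> block_family s m \<longleftrightarrow> j \<in> block s b"
proof
  assume "insert j S \<in> block_family s m"
  then obtain b' where b': "insert j S \<subseteq> block s b'"
    using assms(5) by (auto simp: block_family_def)
  obtain k where "k \<in> S" using assms(4) by blast
  then have "k div s = b" "k div s = b'"
    using assms(3) b' mem_block_iff[OF assms(1)] by auto
  then show "j \<in> block s b" using b' by auto
qed (use assms in \<open>auto simp: block_family_def\<close>)

section \<open>Online value collected on the blocks\<close>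

lemma card_filter_atLeastLessThan_Suc:
  "i < n \<Longrightarrow> card {j\<in>{i..<n}. j \<in> B} = card {j\<in>{Suc i..<n}. j \<in> B} + (if i \<in> B then 1 else 0)"
proof -
  assume "i < n"
  then have "{j\<in>{i..<n}. j \<in> B} =
      (if i \<in> B then insert i {j\<in>{Suc i..<n}. j \<in> B} else {j\<in>{Suc i..<n}. j \<in> B})"
    by (auto simp: Suc_le_eq order.order_iff_strict)
  then show ?thesis by simp
qed

text \<open>Before the first acceptance the potential is 1, a bound on the first accepted weight, plus
  p for each of the at most s - 1 later elements of its block; afterwards it is the value
  collected so far plus p for each remaining element that can still join the accepted set.\<close>
definition block_potential :: "nat \<Rightarrow> nat \<Rightarrow> real \<Rightarrow> nat \<Rightarrow> real list \<Rightarrow> nat set \<Rightarrow> real" where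
  "block_potential s m p i ws S = (if S = {} then 1 + real (s - 1) * p
     else setval ws S + p * real (card {j\<in>{i..<m * s}. insert j S \<in> block_family s m}))"

lemma block_potential_Suc_empty_le:
  assumes "0 < s" "0 \<le> p" "i < m * s" "length ws = i" "w \<le> 1"
  shows "block_potential s m p (Suc i) (ws @ [w])
      (if c \<and> insert i {} \<in> block_family s m then insert i {} else {})
    \<le> block_potential s m p i ws {}"
proof -
  have b: "i div s < m" using assms(1,3) by (simp add: div_less_iff_less_mult)
  have i: "i \<in> block s (i div s)" using mem_block_iff[OF assms(1)] by simp
  let ?C = "{j\<in>{Suc i..<m * s}. insert j {i} \<in> block_family s m}"
  have "?C \<subseteq> block s (i div s) - {i}"
  proof
    fix j assume j: "j \<in> ?C"
    then have "j \<in> block s (i div s)"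
      using insert_mem_block_family_iff[OF assms(1) b, of "{i}" j] i by auto
    then show "j \<in> block s (i div s) - {i}" using j by auto
  qed
  then have "card ?C \<le> card (block s (i div s) - {i})"
    by (intro card_mono) (auto simp: block_def)
  also have "\<dots> = s - 1" using i by (simp add: card_block)
  finally have "p * real (card ?C) \<le> p * real (s - 1)"
    using assms(2) by (intro mult_left_mono) auto
  moreover have "setval (ws @ [w]) {i} = w" using assms(4)[symmetric] by (simp add: setval_def)
  ultimately show ?thesis using assms(5) by (auto simp: block_potential_def algebra_simps)
qed

lemma block_potential_Suc_nonempty_le:
  assumes s: "0 < s" and i: "i < m * s" and ws: "length ws = i"
    and S: "S \<subseteq> {..<i}" "S \<in> block_family s m" "S \<noteq> {}" and w: "0 \<le> w"
  shows "block_potential s m p (Suc i) (ws @ [w])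
      (if c \<and> insert i S \<in> block_family s m then insert i S else S)
    \<le> block_potential s m p i ws S + (if insert i S \<in> block_family s m then w - p else 0)"
proof -
  obtain b where b: "b < m" "S \<subseteq> block s b"
    using S i by (auto simp: block_family_def)
  define A where "A k = {j\<in>{k..<m * s}. j \<in> block s b}" for k
  have extensions: "{j\<in>{k..<m * s}. insert j T \<in> block_family s m} = A k"
    if "T \<subseteq> block s b" "T \<noteq> {}" for k T
    using insert_mem_block_family_iff[OF s b(1) that] by (auto simp: A_def)
  have card_A: "card (A i) = card (A (Suc i)) + (if i \<in> block s b then 1 else 0)"
    unfolding A_def by (rule card_filter_atLeastLessThan_Suc[OF i])
  have insert_iff: "insert i S \<in> block_family s m \<longleftrightarrow> i \<in> block s b"
    by (rule insert_mem_block_family_iff[OF s b S(3) i])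
  have "setval (ws @ [w]) S = setval ws S" "setval (ws @ [w]) (insert i S) = w + setval ws S"
    using S(1) ws setval_append setval_append_insert by auto
  then show ?thesis
    using extensions[OF b(2) S(3)] extensions[of "insert i S"] card_A insert_iff b(2) S(3) w
    by (cases "i \<in> block s b") (auto simp: block_potential_def algebra_simps)
qed

lemma expectation_block_potential_Suc_le:
  assumes s: "0 < s" and p: "0 \<le> p" "p \<le> 1" and i: "i < m * s" and ws: "length ws = i"
    and S: "S \<subseteq> {..<i}" "S \<in> block_family s m"
  shows "measure_pmf.expectation (two_point_pmf p 1) (\<lambda>w.
      measure_pmf.expectation (bernoulli_pmf (q ws S w)) (\<lambda>c. block_potential s m p (Suc i) (ws @ [w])
        (if c \<and> insert i S \<in> block_family s m then insert i S else S)))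
    \<le> block_potential s m p i ws S" (is "?lhs \<le> _")
proof -
  define \<delta> where "\<delta> w = (if S \<noteq> {} \<and> insert i S \<in> block_family s m then w - p else 0)" for w
  have "?lhs \<le> measure_pmf.expectation (two_point_pmf p 1) (\<lambda>w. block_potential s m p i ws S + \<delta> w)"
  proof (intro expectation_mono_pmf_finite expectation_le_const_pmf_finite
      finite_set_two_point_pmf finite_class.finite)
    fix w c assume "w \<in> set_pmf (two_point_pmf p 1)"
    then have "0 \<le> w" "w \<le> 1" using set_two_point_pmf[of p 1] by auto
    then show "block_potential s m p (Suc i) (ws @ [w])
        (if c \<and> insert i S \<in> block_family s m then insert i S else S)
      \<le> block_potential s m p i ws S + \<delta> w"
    proof (cases "S = {}")
      case True
      then show ?thesis unfolding True \<delta>_def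
        using block_potential_Suc_empty_le[OF s p(1) i ws \<open>w \<le> 1\<close>, of c]
        by (simp split del: if_split)
    next
      case False
      then show ?thesis using block_potential_Suc_nonempty_le[OF s i ws S False \<open>0 \<le> w\<close>, of p c]
        by (simp add: \<delta>_def)
    qed
  qed
  also have "\<dots> = block_potential s m p i ws S"
    using p by (simp add: expectation_two_point_pmf \<delta>_def algebra_simps)
  finally show ?thesis .
qed

lemma expectation_block_potential_le:
  assumes s: "0 < s" and p: "0 \<le> p" "p \<le> 1"
    and D: "\<And>j. j < m * s \<Longrightarrow> D j = two_point_pmf p 1" and i: "i \<le> m * s"
  shows "measure_pmf.expectation (run q (block_family s m) D i)
      (\<lambda>(ws, S). block_potential s m p i ws S) \<le> 1 + real (s - 1) * p"
  using i
proof (induction i)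
  case 0
  then show ?case by (simp add: block_potential_def)
next
  case (Suc i)
  have finite_D: "\<forall>j\<le>i. finite (set_pmf (D j))"
    using D Suc.prems by (simp add: finite_set_two_point_pmf)
  then have finite_run: "finite (set_pmf (run q (block_family s m) D i))"
    by (intro finite_set_pmf_run) simp
  have "measure_pmf.expectation (run q (block_family s m) D (Suc i))
      (\<lambda>(ws, S). block_potential s m p (Suc i) ws S)
    \<le> measure_pmf.expectation (run q (block_family s m) D i)
        (\<lambda>(ws, S). block_potential s m p i ws S)"
    unfolding expectation_run_Suc[OF finite_D]
  proof (rule expectation_mono_pmf_finite[OF finite_run], clarsimp)
    fix ws S assume "(ws, S) \<in> set_pmf (run q (block_family s m) D i)"
    then have "length ws = i" "S \<subseteq> {..<i}" "S \<in> block_family s m"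
      using set_pmf_runD[of "block_family s m"] by (auto simp: block_family_def)
    then show "measure_pmf.expectation (D i) (\<lambda>w.
        measure_pmf.expectation (bernoulli_pmf (q ws S w)) (\<lambda>c. block_potential s m p (Suc i) (ws @ [w])
          (if c \<and> insert i S \<in> block_family s m then insert i S else S)))
      \<le> block_potential s m p i ws S"
      using expectation_block_potential_Suc_le[OF s p] D Suc.prems by simp
  qed
  then show ?case using Suc by simp
qed

lemma expectation_setval_run_le:
  assumes "0 < s" "0 \<le> p" "p \<le> 1" "\<And>j. j < m * s \<Longrightarrow> D j = two_point_pmf p 1"
  shows "measure_pmf.expectation (run q (block_family s m) D (m * s)) (\<lambda>(ws, S). setval ws S)
    \<le> 1 + real (s - 1) * p"
proof -
  have "measure_pmf.expectation (run q (block_family s m) D (m * s)) (\<lambda>(ws, S). setval ws S)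
    \<le> measure_pmf.expectation (run q (block_family s m) D (m * s))
         (\<lambda>(ws, S). block_potential s m p (m * s) ws S)"
    using assms(2,4)
    by (intro expectation_mono_pmf_finite finite_set_pmf_run)
      (auto simp: block_potential_def setval_def finite_set_two_point_pmf)
  also have "\<dots> \<le> 1 + real (s - 1) * p"
    by (rule expectation_block_potential_le[OF assms order_refl])
  finally show ?thesis .
qed

section \<open>Full blocks\<close>

definition has_full_block :: "nat \<Rightarrow> nat \<Rightarrow> real list \<Rightarrow> bool" where
  "has_full_block s m ws \<longleftrightarrow> (\<exists>b<m. \<forall>j\<in>block s b. ws ! j = 1)"

lemma has_full_block_append:
  assumes "m * s \<le> length ws"
  shows "has_full_block s m (ws @ vs) \<longleftrightarrow> has_full_block s m ws"
proof -
  have "(ws @ vs) ! j = ws ! j" if "b < m" "j \<in> block s b" for b j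
  proof -
    have "j < m * s" using block_subset_lessThan[OF that(1), of s] that(2) by auto
    then show ?thesis using assms by (simp add: nth_append)
  qed
  then show ?thesis unfolding has_full_block_def by auto
qed

lemma has_full_block_Suc_append:
  assumes "length ws = m * s" "length vs = s"
  shows "has_full_block s (Suc m) (ws @ vs) \<longleftrightarrow> has_full_block s m ws \<or> (\<forall>j<s. vs ! j = 1)"
proof -
  have "block s m = (\<lambda>j. j + m * s) ` {..<s}"
    by (simp add: block_def image_add_atLeastLessThan' lessThan_atLeast0 add.commute)
  then have "(\<forall>j\<in>block s m. (ws @ vs) ! j = 1) \<longleftrightarrow> (\<forall>j<s. vs ! j = 1)"
    using assms by (auto simp: nth_append)
  then show ?thesis
    using has_full_block_append[of m s ws vs] assms by (auto simp: has_full_block_def less_Suc_eq)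
qed

lemma expectation_all_ones:
  assumes "0 \<le> p" "p \<le> 1"
  shows "measure_pmf.expectation (wdist (\<lambda>_. two_point_pmf p 1) k)
      (\<lambda>vs. of_bool (\<forall>j<k. vs ! j = 1)) = p ^ k"
proof (induction k)
  case 0
  then show ?case by simp
next
  case (Suc k)
  let ?W = "wdist (\<lambda>_. two_point_pmf p 1)"
  have finite_B: "\<forall>j\<le>k. finite (set_pmf ((\<lambda>_. two_point_pmf p 1) j))"
    by (simp add: finite_set_two_point_pmf)
  have "measure_pmf.expectation (?W (Suc k)) (\<lambda>vs. of_bool (\<forall>j<Suc k. vs ! j = 1) :: real)
      = measure_pmf.expectation (?W k) (\<lambda>vs. of_bool (\<forall>j<k. vs ! j = 1) * p)"
    unfolding expectation_wdist_Suc[OF finite_B]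
    using assms set_pmf_wdistD
    by (intro expectation_cong_pmf) (auto simp: expectation_two_point_pmf nth_append less_Suc_eq)
  then show ?case using Suc by simp
qed

lemma expectation_no_full_block:
  assumes "0 \<le> p" "p \<le> 1"
  shows "measure_pmf.expectation (wdist (\<lambda>_. two_point_pmf p 1) (m * s))
      (\<lambda>ws. of_bool (\<not> has_full_block s m ws)) = (1 - p ^ s) ^ m"
proof (induction m)
  case 0
  then show ?case by (simp add: has_full_block_def)
next
  case (Suc m)
  let ?W = "wdist (\<lambda>_. two_point_pmf p 1)"
  have finite_W: "finite (set_pmf (?W n))" for n
    by (intro finite_set_pmf_wdist finite_set_two_point_pmf)
  have "measure_pmf.expectation (?W (Suc m * s)) (\<lambda>ws. of_bool (\<not> has_full_block s (Suc m) ws))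
      = measure_pmf.expectation (?W (m * s)) (\<lambda>ws. measure_pmf.expectation (?W s)
          (\<lambda>vs. of_bool (\<not> has_full_block s (Suc m) (ws @ vs)) :: real))"
    unfolding mult_Suc add.commute[of s] wdist_add
    by (simp add: expectation_bind_pmf_finite finite_W)
  also have "\<dots> = measure_pmf.expectation (?W (m * s))
      (\<lambda>ws. of_bool (\<not> has_full_block s m ws) * (1 - p ^ s))"
  proof (rule expectation_cong_pmf)
    fix ws assume "ws \<in> set_pmf (?W (m * s))"
    then have ws: "length ws = m * s" using set_pmf_wdistD by blast
    have "measure_pmf.expectation (?W s) (\<lambda>vs. of_bool (\<not> has_full_block s (Suc m) (ws @ vs)))
        = measure_pmf.expectation (?W s)
            (\<lambda>vs. of_bool (\<not> has_full_block s m ws) * (1 - of_bool (\<forall>j<s. vs ! j = 1)) :: real)"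
      (is "?lhs = _")
      using has_full_block_Suc_append[OF ws] set_pmf_wdistD by (intro expectation_cong_pmf) auto
    also have "\<dots> = of_bool (\<not> has_full_block s m ws) * (1 - p ^ s)"
      using expectation_all_ones[OF assms, of s]
      by (simp add: integrable_measure_pmf_finite finite_W)
    finally show "?lhs = of_bool (\<not> has_full_block s m ws) * (1 - p ^ s)" .
  qed
  also have "\<dots> = (1 - p ^ s) ^ Suc m" using Suc by (simp add: mult.commute)
  finally show ?case .
qed

locale block_instance =
  fixes s m :: nat and p r H :: real
  assumes s_pos: "0 < s" and p_nonneg: "0 \<le> p" and p_le_1: "p \<le> 1"
    and r_pos: "0 < r" and r_le_1: "r \<le> 1" and H_pos: "0 < H"
begin

abbreviation N :: nat where "N \<equiv> m * s"
abbreviation F :: "nat set set" where "F \<equiv> block_family s m"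
abbreviation D :: "nat \<Rightarrow> real pmf" where "D \<equiv> block_weights s m p r H"

lemma valid_block_instance: "valid_instance (Suc N) F D"
  using H_pos by (intro valid_instance_block) simp

lemma empty_mem_F: "{} \<in> F"
  by (simp add: block_family_def)

lemma finite_D: "\<forall>j\<le>i. finite (set_pmf (D j))"
  by (simp add: finite_set_block_weights)

lemma D_block: "j < N \<Longrightarrow> D j = two_point_pmf p 1"
  by (simp add: block_weights_def)

lemma D_last: "D N = two_point_pmf r H"
  by (simp add: block_weights_def)

lemma weight_block:
  assumes "ws \<in> set_pmf (wdist D n)" "j < n" "j < N"
  shows "ws ! j = 0 \<or> ws ! j = 1"
proof -
  have "ws ! j \<in> set_pmf (two_point_pmf p 1)"
    using set_pmf_wdistD[OF assms(1)] assms(2,3) by (auto simp: block_weights_def)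
  then show ?thesis using set_two_point_pmf by blast
qed

lemma weight_last:
  assumes "ws \<in> set_pmf (wdist D (Suc N))"
  shows "ws ! N = 0 \<or> ws ! N = H"
proof -
  have "ws ! N \<in> set_pmf (two_point_pmf r H)"
    using set_pmf_wdistD[OF assms] D_last by auto
  then show ?thesis using set_two_point_pmf by blast
qed

lemma weight_nonneg: "ws \<in> set_pmf (wdist D (Suc N)) \<Longrightarrow> j < Suc N \<Longrightarrow> 0 \<le> ws ! j"
  using weight_block[of ws "Suc N" j] weight_last[of ws] H_pos
  by (cases "j < N") (auto simp: less_Suc_eq)

lemma expectation_last_nonzero:
  "measure_pmf.expectation (wdist D (Suc N)) (\<lambda>ws. of_bool (ws ! N \<noteq> 0)) = r"
proof -
  have "measure_pmf.expectation (wdist D (Suc N)) (\<lambda>ws. of_bool (ws ! N \<noteq> 0) :: real)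
      = measure_pmf.expectation (wdist D N) (\<lambda>_. r)"
    unfolding expectation_wdist_Suc[OF finite_D]
    using set_pmf_wdistD H_pos r_pos r_le_1
    by (intro expectation_cong_pmf) (simp add: D_last expectation_two_point_pmf nth_append)
  then show ?thesis by simp
qed

lemma expectation_no_full_block_Suc:
  "measure_pmf.expectation (wdist D (Suc N)) (\<lambda>ws. of_bool (\<not> has_full_block s m ws))
    = (1 - p ^ s) ^ m"
proof -
  have "measure_pmf.expectation (wdist D (Suc N)) (\<lambda>ws. of_bool (\<not> has_full_block s m ws) :: real)
      = measure_pmf.expectation (wdist D N) (\<lambda>ws. of_bool (\<not> has_full_block s m ws))"
    unfolding expectation_wdist_Suc[OF finite_D]
    using set_pmf_wdistD has_full_block_append
    by (intro expectation_cong_pmf) (simp add: D_last expectation_two_point_pmf)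
  also have "wdist D N = wdist (\<lambda>_. two_point_pmf p 1) N"
    by (rule wdist_cong) (simp add: block_weights_def)
  finally show ?thesis using expectation_no_full_block p_nonneg p_le_1 by simp
qed

lemma ratio_setval_opt_le:
  assumes ws: "ws \<in> set_pmf (wdist D (Suc N))" and S: "S \<in> F"
  shows "ratio (setval ws S) (opt F ws)
    \<le> of_bool (ws ! N \<noteq> 0) + setval ws (S \<inter> {..<N}) / s + of_bool (\<not> has_full_block s m ws)"
proof -
  have S_sub: "S \<subseteq> {..<Suc N}" using S block_family_subset_Pow by blast
  have val_nonneg: "0 \<le> setval ws T" if "T \<subseteq> S" for T
    using that S_sub weight_nonneg[OF ws] by (intro setval_nonneg) auto
  have val_le_opt: "setval ws S \<le> opt F ws" by (rule setval_le_opt[OF finite_block_family S])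
  show ?thesis
  proof (cases "ws ! N = 0 \<and> has_full_block s m ws")
    case False
    have "0 \<le> setval ws (S \<inter> {..<N}) / s" using val_nonneg[of "S \<inter> {..<N}"] by simp
    then show ?thesis using False ratio_le_1[OF val_nonneg val_le_opt] by auto
  next
    case True
    then obtain b where b: "b < m" "\<forall>j\<in>block s b. ws ! j = 1" by (auto simp: has_full_block_def)
    then have "block s b \<in> F" by (auto simp: block_family_def)
    moreover have "setval ws (block s b) = real s"
      using b(2) by (simp add: setval_def card_block)
    ultimately have "real s \<le> opt F ws"
      using setval_le_opt[OF finite_block_family] by metis
    moreover have "setval ws S = setval ws (S \<inter> {..<N})"
      unfolding setval_def using S_sub True
      by (intro sum.mono_neutral_right) (auto intro: finite_subset simp: less_Suc_eq)
    ultimately show ?thesis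
      using ratio_le_divide[OF val_nonneg _ _, of S s] s_pos True by simp
  qed
qed

lemma EoR_alg_le: "EoR_alg (Suc N) F D q \<le> r + (1 + real (s - 1) * p) / s + (1 - p ^ s) ^ m"
proof -
  let ?R = "run q F D (Suc N)"
  have fin: "finite (set_pmf ?R)" by (intro finite_set_pmf_run finite_set_block_weights)
  have "EoR_alg (Suc N) F D q \<le> measure_pmf.expectation ?R (\<lambda>x. of_bool (fst x ! N \<noteq> 0)
      + setval (fst x) (snd x \<inter> {..<N}) / s + of_bool (\<not> has_full_block s m (fst x)))"
    unfolding EoR_alg_def
  proof (rule expectation_mono_pmf_finite[OF fin])
    fix x assume x: "x \<in> set_pmf ?R"
    obtain ws S where x_eq: "x = (ws, S)" by fastforce
    have "ws \<in> set_pmf (wdist D (Suc N))" "S \<in> F"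
      using x set_pmf_run_fst set_pmf_runD[OF empty_mem_F] unfolding x_eq by blast+
    then show "(case x of (ws, S) \<Rightarrow> ratio (setval ws S) (opt F ws)) \<le> of_bool (fst x ! N \<noteq> 0)
        + setval (fst x) (snd x \<inter> {..<N}) / s + of_bool (\<not> has_full_block s m (fst x))"
      using ratio_setval_opt_le unfolding x_eq by simp
  qed
  also have "\<dots> = measure_pmf.expectation ?R (\<lambda>x. of_bool (fst x ! N \<noteq> 0))
      + measure_pmf.expectation ?R (\<lambda>x. setval (fst x) (snd x \<inter> {..<N})) / s
      + measure_pmf.expectation ?R (\<lambda>x. of_bool (\<not> has_full_block s m (fst x)))"
    by (simp only: Bochner_Integration.integral_add integrable_measure_pmf_finite[OF fin]
        integral_divide_zero)
  also have "\<dots> = r + measure_pmf.expectation (run q F D N) (\<lambda>(ws, S). setval ws S) / s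
      + (1 - p ^ s) ^ m"
    using expectation_last_nonzero expectation_no_full_block_Suc
      expectation_run_fst[where g = "\<lambda>ws. of_bool (ws ! N \<noteq> 0)"]
      expectation_run_fst[where g = "\<lambda>ws. of_bool (\<not> has_full_block s m ws)"]
      expectation_run_Suc_setval_restrict[OF empty_mem_F finite_D, unfolded case_prod_unfold]
    by (simp add: case_prod_unfold del: run.simps wdist.simps)
  also have "\<dots> \<le> r + (1 + real (s - 1) * p) / s + (1 - p ^ s) ^ m"
    using expectation_setval_run_le[OF s_pos p_nonneg p_le_1 D_block, where q = q]
    by (simp add: divide_right_mono)
  finally show ?thesis .
qed

lemma expectation_accept_only:
  "measure_pmf.expectation (run (accept_only N) F D (Suc N)) (\<lambda>(ws, S). setval ws S) = H * r"
proof -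
  have "measure_pmf.expectation (run (accept_only N) F D (Suc N)) (\<lambda>(ws, S). setval ws S)
      = measure_pmf.expectation (run (accept_only N) F D N) (\<lambda>_. H * r)"
    unfolding expectation_run_Suc[OF finite_D]
  proof (rule expectation_cong_pmf, clarsimp)
    fix ws S assume run: "(ws, S) \<in> set_pmf (run (accept_only N) F D N)"
    have "S = {}" "length ws = N"
      using set_pmf_run_accept_only[OF empty_mem_F order_refl run] set_pmf_runD[OF empty_mem_F run]
      by auto
    moreover have "{N} \<in> F" by (simp add: block_family_def)
    ultimately show "measure_pmf.expectation (D N) (\<lambda>w. measure_pmf.expectation
        (bernoulli_pmf (accept_only N ws S w))
        (\<lambda>c. setval (ws @ [w]) (if c \<and> insert N S \<in> F then insert N S else S))) = H * r"
      using r_pos r_le_1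
      by (simp add: accept_only_def D_last expectation_two_point_pmf setval_def nth_append)
  qed
  then show ?thesis by simp
qed

lemma opt_le_s_plus_last:
  assumes ws: "ws \<in> set_pmf (wdist D (Suc N))"
  shows "opt F ws \<le> real s + ws ! N"
proof (rule opt_le[OF finite_block_family])
  show "F \<noteq> {}" by (auto simp: block_family_def)
next
  have last_nonneg: "0 \<le> ws ! N" using weight_nonneg[OF ws] by simp
  fix S assume "S \<in> F"
  then consider b where "b < m" "S \<subseteq> block s b" | "S \<subseteq> {N}"
    by (auto simp: block_family_def)
  then show "setval ws S \<le> real s + ws ! N"
  proof cases
    case 1
    have "ws ! j \<le> 1" if "j \<in> S" for j
    proof -
      have "j < N" using 1 block_subset_lessThan[OF 1(1), of s] that by auto
      then show ?thesis using weight_block[OF ws, of j] by auto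
    qed
    then have "setval ws S \<le> real (card S)"
      unfolding setval_def using sum_bounded_above[of S "\<lambda>j. ws ! j" 1] by auto
    also have "card S \<le> s" using 1 card_mono[of "block s b" S] by (simp add: block_def)
    finally show ?thesis using last_nonneg by simp
  next
    case 2
    then have "S = {} \<or> S = {N}" by auto
    then show ?thesis using last_nonneg by (auto simp: setval_def)
  qed
qed

lemma expectation_opt_le: "measure_pmf.expectation (wdist D (Suc N)) (opt F) \<le> s + H * r"
proof -
  have "measure_pmf.expectation (wdist D (Suc N)) (opt F)
      \<le> measure_pmf.expectation (wdist D (Suc N)) (\<lambda>ws. real s + ws ! N)"
    by (intro expectation_mono_pmf_finite finite_set_pmf_wdist finite_set_block_weights
        opt_le_s_plus_last)
  also have "\<dots> = measure_pmf.expectation (wdist D N) (\<lambda>_. s + H * r)"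
    unfolding expectation_wdist_Suc[OF finite_D]
    using set_pmf_wdistD r_pos r_le_1
    by (intro expectation_cong_pmf)
      (simp add: D_last expectation_two_point_pmf nth_append algebra_simps)
  finally show ?thesis by simp
qed

lemma RoE_ge: "H * r / (s + H * r) \<le> RoE (Suc N) F D"
proof -
  have "H * r \<le> measure_pmf.expectation (wdist D (Suc N)) (opt F)"
    using expectation_setval_le_expectation_opt[OF valid_block_instance, of "accept_only N"]
      expectation_accept_only by simp
  moreover have "0 < H * r" using H_pos r_pos by simp
  ultimately have "H * r / (s + H * r) \<le> RoE_alg (Suc N) F D (accept_only N)"
    unfolding RoE_alg_def expectation_accept_only
    using expectation_opt_le by (intro divide_left_mono) auto
  also have "\<dots> \<le> RoE (Suc N) F D" by (rule RoE_alg_le_RoE[OF valid_block_instance])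
  finally show ?thesis .
qed

end

theorem corollary3:
  shows "\<exists>c::real. c > 0 \<and>
           (\<forall>\<epsilon>::real. \<epsilon> > 0 \<longrightarrow>
              (\<exists>n F D. valid_instance n F D \<and> EoR n F D \<le> \<epsilon> \<and> RoE n F D \<ge> c))"
proof (intro exI[of _ "1/2"] conjI allI impI)
  fix \<epsilon> :: real assume \<epsilon>: "0 < \<epsilon>"
  define s where "s = nat \<lceil>8 / \<epsilon>\<rceil> + 1"
  define r where "r = min 1 (\<epsilon> / 4)"
  have s: "0 < s" "8 / \<epsilon> \<le> real s" unfolding s_def by linarith+
  have r: "0 < r" "r \<le> 1" "r \<le> \<epsilon> / 4" using \<epsilon> by (auto simp: r_def)
  obtain m where m: "(1 - (1 / s) ^ s) ^ m < \<epsilon> / 4"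
    using real_arch_pow_inv[of "\<epsilon> / 4" "1 - (1 / s) ^ s"] \<epsilon> s(1) by auto
  interpret block_instance s m "1 / s" r "s / r"
    using s(1) r(1,2) by unfold_locales auto
  have "(1 + real (s - 1) * (1 / s)) / s \<le> 2 / s"
    using s(1) by (intro divide_right_mono) (auto simp: of_nat_diff)
  also have "2 / s \<le> \<epsilon> / 4" using s \<epsilon> by (simp add: field_simps)
  finally have "EoR (Suc N) F D \<le> \<epsilon>"
    using EoR_le[OF EoR_alg_le] r(3) m \<epsilon> by linarith
  moreover have "1 / 2 \<le> RoE (Suc N) F D"
    using RoE_ge r(1) s(1) by simp
  ultimately show "\<exists>n F D. valid_instance n F D \<and> EoR n F D \<le> \<epsilon> \<and> 1 / 2 \<le> RoE n F D"
    using valid_block_instance by blast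
qed simp

end
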